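(* Let $\mathcal X,\mathcal U$ be finite nonempty sets, $f:\mathcal X\times\mathcal U\to\mathcal X$ and $\ell_1,\ell_2:\mathcal X\to\mathbb R$. For $i=1,2$ let $V_{\mathrm{R}i}^*(x)=\max_{\pi\in\Pi}\max_{\tau\in\mathbb N}\ell_i(\xi_x^\pi(\tau))$, $\hat\ell(x)=\max\{\min\{\ell_1(x),V_{\mathrm{R}2}^*(x)\},\min\{V_{\mathrm{R}1}^*(x),\ell_2(x)\}\}$, $\tilde v_{\mathrm R}^*(x)=\max_{\mathbf u\in\mathbb U}\max_{\tau\in\mathbb N}\hat\ell(\xi_x^{\mathbf u}(\tau))$ and $$v_{\mathrm{RR}}^*(x)=\max_{\mathbf u\in\mathbb U}\min\Big\{\max_{\tau\in\mathbb N}\ell_1(\xi_x^{\mathbf u}(\tau)),\max_{\tau\in\mathbb N}\ell_2(\xi_x^{\mathbf u}(\tau))\Big\}.$$ Then $\tilde v_{\mathrm R}^*(x)=v_{\mathrm{RR}}^*(x)$ for every $x\in\mathcal X$.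
   Context: $\mathbb N=\{0,1,\dots\}$; $\Pi$ is the set of maps $\mathcal X\to\mathcal U$; $\mathbb U$ is the set of sequences $\mathbb N\to\mathcal U$. For $\pi\in\Pi$: $\xi_x^\pi(0)=x$, $\xi_x^\pi(t+1)=f(\xi_x^\pi(t),\pi(\xi_x^\pi(t)))$. For $\mathbf u\in\mathbb U$: $\xi_x^{\mathbf u}(0)=x$, $\xi_x^{\mathbf u}(t+1)=f(\xi_x^{\mathbf u}(t),\mathbf u(t))$. *)

theory Defs
  imports "HOL-Analysis.Analysis"
begin

primrec traj_pol :: "('x \<Rightarrow> 'u \<Rightarrow> 'x) \<Rightarrow> ('x \<Rightarrow> 'u) \<Rightarrow> 'x \<Rightarrow> nat \<Rightarrow> 'x" where
  "traj_pol f p x 0 = x"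
| "traj_pol f p x (Suc t) = f (traj_pol f p x t) (p (traj_pol f p x t))"

primrec traj_seq :: "('x \<Rightarrow> 'u \<Rightarrow> 'x) \<Rightarrow> (nat \<Rightarrow> 'u) \<Rightarrow> 'x \<Rightarrow> nat \<Rightarrow> 'x" where
  "traj_seq f u x 0 = x"
| "traj_seq f u x (Suc t) = f (traj_seq f u x t) (u t)"

text \<open>V_Ri^*(x) = max over policies and times of l(xi_x^p(tau)).
  All value sets below are finite (subsets of the image of a finite state space), so Max is the maximum.\<close>
definition VR :: "('x \<Rightarrow> 'u \<Rightarrow> 'x) \<Rightarrow> ('x \<Rightarrow> real) \<Rightarrow> 'x \<Rightarrow> real" where
  "VR f l x = Max {l (traj_pol f p x tau) | p tau. True}"

definition lhat :: "('x \<Rightarrow> 'u \<Rightarrow> 'x) \<Rightarrow> ('x \<Rightarrow> real) \<Rightarrow> ('x \<Rightarrow> real) \<Rightarrow> 'x \<Rightarrow> real" where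
  "lhat f l1 l2 x = max (min (l1 x) (VR f l2 x)) (min (VR f l1 x) (l2 x))"

definition vR_tilde :: "('x \<Rightarrow> 'u \<Rightarrow> 'x) \<Rightarrow> ('x \<Rightarrow> real) \<Rightarrow> ('x \<Rightarrow> real) \<Rightarrow> 'x \<Rightarrow> real" where
  "vR_tilde f l1 l2 x = Max {lhat f l1 l2 (traj_seq f u x tau) | u tau. True}"

definition vRR :: "('x \<Rightarrow> 'u \<Rightarrow> 'x) \<Rightarrow> ('x \<Rightarrow> real) \<Rightarrow> ('x \<Rightarrow> real) \<Rightarrow> 'x \<Rightarrow> real" where
  "vRR f l1 l2 x = Max {min (Max {l1 (traj_seq f u x tau) | tau. True})
                            (Max {l2 (traj_seq f u x tau) | tau. True}) | u. True}"

end

theory Submission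
  imports Defs
begin

text \<open>A state on an open-loop trajectory is also reached by a feedback policy (cut the loops
  of the trajectory), so \<open>VR f l y\<close> is the largest value of \<open>l\<close> over the states reachable from
  \<open>y\<close>. If a control sequence attains its \<open>l1\<close>-peak at \<open>t1 \<le> t2\<close>, where \<open>t2\<close> is its
  \<open>l2\<close>-peak, then at \<open>y = \<xi>(t1)\<close> the state \<open>\<xi>(t2)\<close> is still reachable, so the smaller peak is
  at most \<open>min (l1 y) (VR f l2 y)\<close>. Conversely, \<open>min (l1 y) (VR f l2 y)\<close> at a state \<open>y\<close> of a
  trajectory is achieved by following that trajectory up to \<open>y\<close> and then steering to a maximiser
  of \<open>l2\<close>. The remaining cases follow by exchanging \<open>l1\<close> and \<open>l2\<close>.\<close>

abbreviation peak :: "('x \<Rightarrow> 'u \<Rightarrow> 'x) \<Rightarrow> ('x \<Rightarrow> real) \<Rightarrow> (nat \<Rightarrow> 'u) \<Rightarrow> 'x \<Rightarrow> real" where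
  "peak f l u x \<equiv> Max {l (traj_seq f u x tau) | tau. True}"

lemma traj_seq_shift:
  "traj_seq f u x (a + b) = traj_seq f (\<lambda>i. u (a + i)) (traj_seq f u x a) b"
  by (induction b) auto

lemma traj_seq_append:
  "\<exists>w. traj_seq f w x t = traj_seq f u x t
     \<and> traj_seq f w x (t + s) = traj_seq f v (traj_seq f u x t) s"
proof -
  define w where "w i = (if i < t then u i else v (i - t))" for i
  have "i \<le> t \<Longrightarrow> traj_seq f w x i = traj_seq f u x i" for i
    by (induction i) (auto simp: w_def)
  moreover have "(\<lambda>i. w (t + i)) = v"
    by (auto simp: w_def)
  ultimately show ?thesis
    using traj_seq_shift[of f w x t s] by auto
qed

lemma traj_pol_eq_traj_seq: "traj_pol f p x t = traj_seq f (\<lambda>i. p (traj_pol f p x i)) x t"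
  by (induction t) auto

lemma traj_pol_shift: "traj_pol f p x (k + i) = traj_pol f p (traj_pol f p x k) i"
  by (induction i) auto

lemma traj_pol_fun_upd_unvisited:
  assumes "\<forall>k\<le>s. traj_pol f p y k \<noteq> x" and "i \<le> s"
  shows "traj_pol f (p(x := c)) y i = traj_pol f p y i"
  using assms(2)
proof (induction i)
  case (Suc i)
  then have "traj_pol f p y i \<noteq> x"
    using assms(1) by simp
  with Suc show ?case
    by simp
qed simp

lemma traj_seq_reached_by_policy: "\<exists>p s. traj_pol f p x s = traj_seq f u x t"
proof (induction t arbitrary: x u)
  case 0
  show ?case
    by (metis traj_pol.simps(1) traj_seq.simps(1))
next
  case (Suc t)
  define x' where "x' = f x (u 0)"
  obtain p s where "traj_pol f p x' s = traj_seq f (\<lambda>i. u (Suc i)) x' t"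
    using Suc.IH by blast
  then have target: "traj_seq f u x (Suc t) = traj_pol f p x' s"
    using traj_seq_shift[of f u x 1 t] by (simp add: x'_def)
  show ?case
  proof (cases "\<exists>k\<le>s. traj_pol f p x' k = x")
    case True
    then obtain k where "k \<le> s" "traj_pol f p x' k = x"
      by blast
    then have "traj_pol f p x (s - k) = traj_pol f p x' s"
      using traj_pol_shift[of f p x' k "s - k"] by simp
    with target show ?thesis
      by metis
  next
    case False
    \<comment> \<open>the policy never returns to \<open>x\<close>, so it may be redirected there along \<open>u 0\<close>\<close>
    have "traj_pol f (p(x := u 0)) x (Suc s) = traj_pol f (p(x := u 0)) x' s"
      using traj_pol_shift[of f "p(x := u 0)" x 1 s] by (simp add: x'_def)
    also have "\<dots> = traj_pol f p x' s"
      using False by (intro traj_pol_fun_upd_unvisited) auto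
    finally show ?thesis
      using target by metis
  qed
qed

context
  fixes f :: "'x::finite \<Rightarrow> 'u \<Rightarrow> 'x"
begin

lemma VR_ge: "l (traj_seq f u x t) \<le> VR f l x"
proof -
  obtain p s where "traj_pol f p x s = traj_seq f u x t"
    using traj_seq_reached_by_policy[of f] by blast
  then have "l (traj_seq f u x t) \<in> {l (traj_pol f p x tau) | p tau. True}"
    by (metis (mono_tags, lifting) mem_Collect_eq)
  moreover have "finite {l (traj_pol f p x tau) | p tau. True}"
    by (rule finite_subset[of _ "range l"]) auto
  ultimately show ?thesis
    unfolding VR_def by (rule Max_ge[rotated])
qed

lemma VR_attained: "\<exists>u t. VR f l x = l (traj_seq f u x t)"
proof -
  have "finite {l (traj_pol f p x tau) | p tau. True}"
    by (rule finite_subset[of _ "range l"]) auto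
  then have "VR f l x \<in> {l (traj_pol f p x tau) | p tau. True}"
    unfolding VR_def by (rule Max_in) auto
  then obtain p tau where "VR f l x = l (traj_pol f p x tau)"
    by blast
  then show ?thesis
    by (metis traj_pol_eq_traj_seq)
qed

lemma peak_ge: "l (traj_seq f u x t) \<le> peak f l u x"
  by (rule Max_ge, rule finite_subset[of _ "range l"]) auto

lemma peak_attained: "\<exists>t. peak f l u x = l (traj_seq f u x t)"
proof -
  have "finite {l (traj_seq f u x tau) | tau. True}"
    by (rule finite_subset[of _ "range l"]) auto
  then have "peak f l u x \<in> {l (traj_seq f u x tau) | tau. True}"
    by (rule Max_in) auto
  then show ?thesis
    by blast
qed

lemma finite_vRR_values: "finite {min (peak f l1 u x) (peak f l2 u x) | u. True}"
proof (rule finite_subset)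
  show "{min (peak f l1 u x) (peak f l2 u x) | u. True} \<subseteq> range l1 \<union> range l2"
  proof
    fix a
    assume "a \<in> {min (peak f l1 u x) (peak f l2 u x) | u. True}"
    then obtain u where a: "a = min (peak f l1 u x) (peak f l2 u x)"
      by blast
    obtain t1 where "peak f l1 u x = l1 (traj_seq f u x t1)"
      using peak_attained by blast
    moreover obtain t2 where "peak f l2 u x = l2 (traj_seq f u x t2)"
      using peak_attained by blast
    ultimately show "a \<in> range l1 \<union> range l2"
      unfolding a min_def by auto
  qed
qed simp

lemma vRR_ge: "min (peak f l1 u x) (peak f l2 u x) \<le> vRR f l1 l2 x"
  unfolding vRR_def using finite_vRR_values by (rule Max_ge) blast

lemma vRR_attained: "\<exists>u. vRR f l1 l2 x = min (peak f l1 u x) (peak f l2 u x)"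
proof -
  have "vRR f l1 l2 x \<in> {min (peak f l1 u x) (peak f l2 u x) | u. True}"
    unfolding vRR_def using finite_vRR_values by (rule Max_in) auto
  then show ?thesis
    by blast
qed

lemma finite_vR_tilde_values: "finite {lhat f l1 l2 (traj_seq f u x tau) | u tau. True}"
  by (rule finite_subset[of _ "range (lhat f l1 l2)"]) auto

lemma vR_tilde_ge: "lhat f l1 l2 (traj_seq f u x t) \<le> vR_tilde f l1 l2 x"
  unfolding vR_tilde_def using finite_vR_tilde_values by (rule Max_ge) blast

lemma vR_tilde_attained: "\<exists>u t. vR_tilde f l1 l2 x = lhat f l1 l2 (traj_seq f u x t)"
proof -
  have "vR_tilde f l1 l2 x \<in> {lhat f l1 l2 (traj_seq f u x tau) | u tau. True}"
    unfolding vR_tilde_def using finite_vR_tilde_values by (rule Max_in) auto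
  then show ?thesis
    by blast
qed

lemma vRR_swap: "vRR f l1 l2 x = vRR f l2 l1 x"
  by (simp add: vRR_def min.commute)

lemma lhat_swap: "lhat f l1 l2 y = lhat f l2 l1 y"
  by (simp add: lhat_def max.commute min.commute)

lemma min_VR_le_vRR: "min (l1 (traj_seq f u x t)) (VR f l2 (traj_seq f u x t)) \<le> vRR f l1 l2 x"
proof -
  define y where "y = traj_seq f u x t"
  obtain v s where v: "VR f l2 y = l2 (traj_seq f v y s)"
    using VR_attained by blast
  obtain w where w: "traj_seq f w x t = y" "traj_seq f w x (t + s) = traj_seq f v y s"
    using traj_seq_append[of f x t u s v] y_def by metis
  have "min (l1 y) (VR f l2 y) \<le> min (peak f l1 w x) (peak f l2 w x)"
    using peak_ge[of l1 w x t] peak_ge[of l2 w x "t + s"] v w by (auto simp: min_def)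
  also have "\<dots> \<le> vRR f l1 l2 x"
    by (rule vRR_ge)
  finally show ?thesis
    by (simp add: y_def)
qed

lemma lhat_le_vRR: "lhat f l1 l2 (traj_seq f u x t) \<le> vRR f l1 l2 x"
  using min_VR_le_vRR[of l1 u x t l2] min_VR_le_vRR[of l2 u x t l1]
  by (simp add: lhat_def vRR_swap[of l2] min.commute)

lemma ordered_peaks_le_lhat:
  assumes "t1 \<le> t2"
  shows "min (l1 (traj_seq f u x t1)) (l2 (traj_seq f u x t2)) \<le> lhat f l1 l2 (traj_seq f u x t1)"
proof -
  have "traj_seq f u x t2 = traj_seq f (\<lambda>i. u (t1 + i)) (traj_seq f u x t1) (t2 - t1)"
    using traj_seq_shift[of f u x t1 "t2 - t1"] assms by simp
  then have "l2 (traj_seq f u x t2) \<le> VR f l2 (traj_seq f u x t1)"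
    by (metis VR_ge)
  then show ?thesis
    by (auto simp: lhat_def)
qed

lemma peaks_le_vR_tilde: "min (peak f l1 u x) (peak f l2 u x) \<le> vR_tilde f l1 l2 x"
proof -
  obtain t1 where t1: "peak f l1 u x = l1 (traj_seq f u x t1)"
    using peak_attained by blast
  obtain t2 where t2: "peak f l2 u x = l2 (traj_seq f u x t2)"
    using peak_attained by blast
  show ?thesis
  proof (cases "t1 \<le> t2")
    case True
    then show ?thesis
      using ordered_peaks_le_lhat[of t1 t2 l1 u x l2] vR_tilde_ge[of l1 l2 u x t1] t1 t2
      by linarith
  next
    case False
    then show ?thesis
      using ordered_peaks_le_lhat[of t2 t1 l2 u x l1] vR_tilde_ge[of l1 l2 u x t2] t1 t2
      by (simp add: lhat_swap[of l2] min.commute)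
  qed
qed

end

theorem mainTheorem15:
  fixes f :: "'x::finite \<Rightarrow> 'u::finite \<Rightarrow> 'x"
    and l1 l2 :: "'x \<Rightarrow> real"
  shows "\<forall>x. vR_tilde f l1 l2 x = vRR f l1 l2 x"
proof
  fix x
  obtain u t where "vR_tilde f l1 l2 x = lhat f l1 l2 (traj_seq f u x t)"
    using vR_tilde_attained by blast
  then have "vR_tilde f l1 l2 x \<le> vRR f l1 l2 x"
    using lhat_le_vRR by metis
  moreover obtain v where "vRR f l1 l2 x = min (peak f l1 v x) (peak f l2 v x)"
    using vRR_attained by blast
  then have "vRR f l1 l2 x \<le> vR_tilde f l1 l2 x"
    using peaks_le_vR_tilde by metis
  ultimately show "vR_tilde f l1 l2 x = vRR f l1 l2 x"
    by (rule antisym)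
qed

end
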